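(* A set $\mathbf D$ of tilings is a closed Condorcet super-domain if and only if it is a median super-domain, i.e. for any $T_1,T_2,T_3\in\mathbf D$ the set $(T_1\cap T_2)\cup(T_2\cap T_3)\cup(T_1\cap T_3)$ belongs to $\mathbf D$.
   Context: Fix an integer $n\ge 3$ and write $[n]=\{1,\dots,n\}$. Let $\Lambda$ be the set of 3-element subsets of $[n]$; a triple $\{i,j,k\}$ with $i<j<k$ is written $ijk$. For a 4-element subset $F=\{i<j<k<l\}$ of $[n]$, the stick of $F$ is the sequence $(ijk,\ ijl,\ ikl,\ jkl)$. A tiling (the inversion set of a rhombus tiling of the zonogon $Z(n;2)$) is a subset $T\subseteq\Lambda$ such that for every 4-element $F\subseteq[n]$, $T\cap\mathrm{stick}(F)$ is an initial segment or a final segment of the stick (empty set and whole stick allowed). For a finite set $V$ of odd cardinality and tilings $(T_v)_{v\in V}$, $sm((T_v)_{v\in V})$ is the set of triples lying in $T_v$ for more than $|V|/2$ indices $v$. A set $\mathbf D$ of tilings is a Condorcet super-domain if for every finite $V$ of odd cardinality and every family $(T_v)_{v\in V}$ with all $T_v\in\mathbf D$, $sm((T_v)_{v\in V})$ is a tiling; it is closed if moreover $sm((T_v)_{v\in V})\in\mathbf D$ for all such $V$ and families. *)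

theory Defs
  imports Main
begin

definition Lambda :: "nat \<Rightarrow> nat set set" where
  "Lambda n = {A. A \<subseteq> {1..n} \<and> card A = 3}"

definition stick :: "nat \<Rightarrow> nat \<Rightarrow> nat \<Rightarrow> nat \<Rightarrow> nat set list" where
  "stick i j k l = [{i,j,k}, {i,j,l}, {i,k,l}, {j,k,l}]"

definition is_tiling :: "nat \<Rightarrow> nat set set \<Rightarrow> bool" where
  "is_tiling n T \<longleftrightarrow> T \<subseteq> Lambda n \<and>
     (\<forall>i j k l. 1 \<le> i \<and> i < j \<and> j < k \<and> k < l \<and> l \<le> n \<longrightarrow>
        (\<exists>m\<le>4. T \<inter> set (stick i j k l) = set (take m (stick i j k l))
               \<or> T \<inter> set (stick i j k l) = set (drop m (stick i j k l))))"

definition sm :: "nat \<Rightarrow> 'v set \<Rightarrow> ('v \<Rightarrow> nat set set) \<Rightarrow> nat set set" where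
  "sm n V T = {t \<in> Lambda n. 2 * card {v \<in> V. t \<in> T v} > card V}"

definition condorcet_super_domain :: "nat \<Rightarrow> nat set set set \<Rightarrow> bool" where
  "condorcet_super_domain n D \<longleftrightarrow> (\<forall>T\<in>D. is_tiling n T) \<and>
     (\<forall>(V::nat set) T. finite V \<and> odd (card V) \<and> (\<forall>v\<in>V. T v \<in> D) \<longrightarrow>
        is_tiling n (sm n V T))"

definition closed_condorcet_super_domain :: "nat \<Rightarrow> nat set set set \<Rightarrow> bool" where
  "closed_condorcet_super_domain n D \<longleftrightarrow> condorcet_super_domain n D \<and>
     (\<forall>(V::nat set) T. finite V \<and> odd (card V) \<and> (\<forall>v\<in>V. T v \<in> D) \<longrightarrow>
        sm n V T \<in> D)"

definition median_super_domain :: "nat \<Rightarrow> nat set set set \<Rightarrow> bool" where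
  "median_super_domain n D \<longleftrightarrow> (\<forall>T\<in>D. is_tiling n T) \<and>
     (\<forall>T1\<in>D. \<forall>T2\<in>D. \<forall>T3\<in>D. (T1 \<inter> T2) \<union> (T2 \<inter> T3) \<union> (T1 \<inter> T3) \<in> D)"

end

(* A median-closed family of sets has Helly number 2: if for every subset P of a finite set S
   with at most two elements some member Y of the family satisfies Y \<inter> P = M \<inter> P, then some
   member agrees with M on all of S.  For three distinct points a, b, c of S, take members
   agreeing with M on S - {a}, S - {b}, S - {c}; their median agrees with M on S.
   For an odd electorate any two strict majorities meet, so on any two triples some voter
   agrees with the majority outcome; hence the majority outcome of a profile in a median-closed
   D agrees on the finite set of all triples with a member of D, i.e. lies in D.  Conversely,
   the median of three tilings is the majority outcome of the three-voter profile. *)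

theory Submission
  imports Defs
begin

definition median3 :: "'a set \<Rightarrow> 'a set \<Rightarrow> 'a set \<Rightarrow> 'a set" where
  "median3 A B C = (A \<inter> B) \<union> (B \<inter> C) \<union> (A \<inter> C)"

definition median_closed :: "'a set set \<Rightarrow> bool" where
  "median_closed D \<longleftrightarrow> (\<forall>A\<in>D. \<forall>B\<in>D. \<forall>C\<in>D. median3 A B C \<in> D)"

definition majority :: "'v set \<Rightarrow> ('v \<Rightarrow> 'a set) \<Rightarrow> 'a set" where
  "majority V T = {x. card V < 2 * card {v\<in>V. x \<in> T v}}"

lemma median3_Int_eq:
  assumes "A \<inter> (S - {a}) = M \<inter> (S - {a})" and "B \<inter> (S - {b}) = M \<inter> (S - {b})"
    and "C \<inter> (S - {c}) = M \<inter> (S - {c})" and "a \<noteq> b" "b \<noteq> c" "a \<noteq> c"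
  shows "median3 A B C \<inter> S = M \<inter> S"
proof -
  have "x \<in> A \<longleftrightarrow> x \<in> M" if "x \<in> S" "x \<noteq> a" for x using assms(1) that by blast
  moreover have "x \<in> B \<longleftrightarrow> x \<in> M" if "x \<in> S" "x \<noteq> b" for x using assms(2) that by blast
  moreover have "x \<in> C \<longleftrightarrow> x \<in> M" if "x \<in> S" "x \<noteq> c" for x using assms(3) that by blast
  ultimately show ?thesis using assms(4-6) unfolding median3_def by auto
qed

lemma median_closed_Helly:
  assumes "median_closed D" and "finite S"
    and "\<And>P. P \<subseteq> S \<Longrightarrow> card P \<le> 2 \<Longrightarrow> \<exists>Y\<in>D. Y \<inter> P = M \<inter> P"
  shows "\<exists>Y\<in>D. Y \<inter> S = M \<inter> S"
  using assms(2,3)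
proof (induction "card S" arbitrary: S rule: less_induct)
  case less
  show ?case
  proof (cases "card S \<le> 2")
    case True
    then show ?thesis using less.prems by blast
  next
    case False
    then have "3 \<le> card S" by simp
    then obtain P where "P \<subseteq> S" "card P = 3" by (rule obtain_subset_with_card_n)
    then obtain a b c where abc: "a \<in> S" "b \<in> S" "c \<in> S" "a \<noteq> b" "b \<noteq> c" "a \<noteq> c"
      by (auto simp: card_3_iff)
    have IH: "\<exists>Y\<in>D. Y \<inter> (S - {x}) = M \<inter> (S - {x})" if "x \<in> S" for x
    proof (rule less.hyps)
      show "card (S - {x}) < card S" using less.prems(1) that by (rule card_Diff1_less)
      show "finite (S - {x})" using less.prems(1) by simp
      show "\<exists>Y\<in>D. Y \<inter> Q = M \<inter> Q" if "Q \<subseteq> S - {x}" "card Q \<le> 2" for Q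
        using that by (intro less.prems(2)) auto
    qed
    obtain Ya where "Ya \<in> D" "Ya \<inter> (S - {a}) = M \<inter> (S - {a})" using IH \<open>a \<in> S\<close> by blast
    obtain Yb where "Yb \<in> D" "Yb \<inter> (S - {b}) = M \<inter> (S - {b})" using IH \<open>b \<in> S\<close> by blast
    obtain Yc where "Yc \<in> D" "Yc \<inter> (S - {c}) = M \<inter> (S - {c})" using IH \<open>c \<in> S\<close> by blast
    have "median3 Ya Yb Yc \<in> D"
      using \<open>median_closed D\<close> \<open>Ya \<in> D\<close> \<open>Yb \<in> D\<close> \<open>Yc \<in> D\<close> by (simp add: median_closed_def)
    moreover have "median3 Ya Yb Yc \<inter> S = M \<inter> S"
      using \<open>Ya \<inter> (S - {a}) = M \<inter> (S - {a})\<close> \<open>Yb \<inter> (S - {b}) = M \<inter> (S - {b})\<close>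
        \<open>Yc \<inter> (S - {c}) = M \<inter> (S - {c})\<close> abc(4-6)
      by (rule median3_Int_eq)
    ultimately show ?thesis by blast
  qed
qed

lemma card_majority_agreeing:
  assumes "finite V" and "odd (card V)"
  shows "card V < 2 * card {v\<in>V. x \<in> T v \<longleftrightarrow> x \<in> majority V T}"
proof (cases "x \<in> majority V T")
  case True
  then show ?thesis by (simp add: majority_def)
next
  case False
  let ?P = "{v\<in>V. x \<in> T v}"
  have "2 * card ?P \<noteq> card V" using \<open>odd (card V)\<close> by (metis dvd_triv_left)
  with False have "2 * card ?P < card V" by (simp add: majority_def)
  moreover have "{v\<in>V. x \<in> T v \<longleftrightarrow> x \<in> majority V T} = V - ?P" using False by auto
  moreover have "card (V - ?P) = card V - card ?P"
    using \<open>finite V\<close> by (intro card_Diff_subset) auto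
  ultimately show ?thesis by simp
qed

lemma strict_majorities_intersect:
  assumes "finite V" "A \<subseteq> V" "B \<subseteq> V" "card V < 2 * card A" "card V < 2 * card B"
  shows "A \<inter> B \<noteq> {}"
proof
  assume "A \<inter> B = {}"
  then have "card (A \<union> B) = card A + card B"
    using assms by (intro card_Un_disjoint) (auto intro: finite_subset)
  moreover have "card (A \<union> B) \<le> card V" using assms by (intro card_mono) auto
  ultimately show False using assms by simp
qed

lemma card_le_2_subset_doubleton:
  assumes "finite S" and "card S \<le> 2"
  obtains a b where "S \<subseteq> {a, b}"
proof (cases "S = {}")
  case False
  then obtain a where "a \<in> S" by blast
  with assms have "card (S - {a}) \<le> Suc 0" by simp
  then have "\<forall>x\<in>S - {a}. \<forall>y\<in>S - {a}. x = y" using \<open>finite S\<close> by (simp add: card_le_Suc0_iff_eq)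
  then obtain b where "S - {a} \<subseteq> {b}" by blast
  with \<open>a \<in> S\<close> have "S \<subseteq> {a, b}" by blast
  then show thesis by (rule that)
qed blast

lemma voter_agreeing_with_majority:
  assumes "finite V" and "odd (card V)" and "finite P" and "card P \<le> 2"
  obtains v where "v \<in> V" "T v \<inter> P = majority V T \<inter> P"
proof -
  obtain a b where "P \<subseteq> {a, b}" using assms(3,4) by (rule card_le_2_subset_doubleton)
  have "{v\<in>V. a \<in> T v \<longleftrightarrow> a \<in> majority V T} \<inter> {v\<in>V. b \<in> T v \<longleftrightarrow> b \<in> majority V T} \<noteq> {}"
    using card_majority_agreeing[OF assms(1,2)] assms(1) by (intro strict_majorities_intersect) auto
  then obtain v where "v \<in> V" "a \<in> T v \<longleftrightarrow> a \<in> majority V T" "b \<in> T v \<longleftrightarrow> b \<in> majority V T"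
    by blast
  with \<open>P \<subseteq> {a, b}\<close> have "T v \<inter> P = majority V T \<inter> P" by blast
  with \<open>v \<in> V\<close> show thesis by (rule that)
qed

lemma median_closed_majority_trace:
  assumes "median_closed D" and "finite V" and "odd (card V)" and "\<forall>v\<in>V. T v \<in> D"
    and "finite S"
  shows "\<exists>Y\<in>D. Y \<inter> S = majority V T \<inter> S"
proof (rule median_closed_Helly[OF assms(1,5)])
  fix P assume "P \<subseteq> S" and "card P \<le> 2"
  have "finite P" using \<open>P \<subseteq> S\<close> \<open>finite S\<close> by (rule finite_subset)
  obtain v where "v \<in> V" "T v \<inter> P = majority V T \<inter> P"
    using assms(2,3) \<open>finite P\<close> \<open>card P \<le> 2\<close> by (rule voter_agreeing_with_majority)
  then show "\<exists>Y\<in>D. Y \<inter> P = majority V T \<inter> P" using assms(4) by blast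
qed

lemma majority_of_three:
  "majority {0, 1, 2 :: nat} (nth [A, B, C]) = median3 A B C"
proof (rule set_eqI)
  fix x
  show "x \<in> majority {0, 1, 2} (nth [A, B, C]) \<longleftrightarrow> x \<in> median3 A B C"
    by (auto simp: majority_def median3_def conj_disj_distribR Collect_disj_eq Collect_conv_if)
qed

lemma finite_Lambda: "finite (Lambda n)"
  unfolding Lambda_def by (rule finite_subset[of _ "Pow {1..n}"]) auto

lemma is_tiling_subset_Lambda: "is_tiling n T \<Longrightarrow> T \<subseteq> Lambda n"
  by (simp add: is_tiling_def)

lemma sm_eq_Lambda_Int_majority: "sm n V T = Lambda n \<inter> majority V T"
  by (auto simp: sm_def majority_def)

definition sm_closed :: "nat \<Rightarrow> nat set set set \<Rightarrow> bool" where
  "sm_closed n D \<longleftrightarrow>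
     (\<forall>(V :: nat set) T. finite V \<and> odd (card V) \<and> (\<forall>v\<in>V. T v \<in> D) \<longrightarrow> sm n V T \<in> D)"

lemma median_closed_imp_sm_closed:
  assumes "\<forall>Y\<in>D. Y \<subseteq> Lambda n" and "median_closed D"
  shows "sm_closed n D"
  unfolding sm_closed_def
proof (intro allI impI, elim conjE)
  fix V :: "nat set" and T assume "finite V" "odd (card V)" "\<forall>v\<in>V. T v \<in> D"
  then obtain Y where "Y \<in> D" "Y \<inter> Lambda n = majority V T \<inter> Lambda n"
    using median_closed_majority_trace[OF assms(2) _ _ _ finite_Lambda] by blast
  moreover from \<open>Y \<in> D\<close> assms(1) have "Y \<inter> Lambda n = Y" by blast
  ultimately show "sm n V T \<in> D" by (simp add: sm_eq_Lambda_Int_majority Int_commute)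
qed

lemma sm_closed_imp_median_closed:
  assumes "\<forall>Y\<in>D. Y \<subseteq> Lambda n" and "sm_closed n D"
  shows "median_closed D"
  unfolding median_closed_def
proof (intro ballI)
  fix A B C assume "A \<in> D" "B \<in> D" "C \<in> D"
  then have "sm n {0, 1, 2} (nth [A, B, C]) \<in> D"
    using assms(2) unfolding sm_closed_def by (auto simp: less_Suc_eq)
  moreover have "median3 A B C \<subseteq> Lambda n"
    using assms(1) \<open>A \<in> D\<close> \<open>B \<in> D\<close> unfolding median3_def by blast
  ultimately show "median3 A B C \<in> D"
    unfolding sm_eq_Lambda_Int_majority majority_of_three by (simp add: Int_absorb1)
qed

lemma closed_condorcet_super_domain_iff:
  "closed_condorcet_super_domain n D \<longleftrightarrow> (\<forall>T\<in>D. is_tiling n T) \<and> sm_closed n D"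
  by (auto simp: closed_condorcet_super_domain_def condorcet_super_domain_def sm_closed_def)

lemma median_super_domain_iff:
  "median_super_domain n D \<longleftrightarrow> (\<forall>T\<in>D. is_tiling n T) \<and> median_closed D"
  by (simp add: median_super_domain_def median_closed_def median3_def)

theorem mainTheorem8:
  fixes n :: nat and D :: "nat set set set"
  assumes "n \<ge> 3"
  shows "closed_condorcet_super_domain n D \<longleftrightarrow> median_super_domain n D"
proof -
  have "sm_closed n D \<longleftrightarrow> median_closed D" if "\<forall>T\<in>D. is_tiling n T"
  proof -
    from that have "\<forall>Y\<in>D. Y \<subseteq> Lambda n" by (simp add: is_tiling_subset_Lambda)
    then show ?thesis using median_closed_imp_sm_closed sm_closed_imp_median_closed by blast
  qed
  then show ?thesis unfolding closed_condorcet_super_domain_iff median_super_domain_iff by blast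
qed

end
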